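(* For every integer $n\geq 4$ and every edge $e$ of $G_n$, the graph $G_n - e$ is $(n-3)$-colourable.
   Context: Let $[n]=\{1,\dots,n\}$. A $2$-subset $\{a,b\}$ of $[n]$ with $a<b$ is called stable if $b \neq a+1$ and $\{a,b\}\neq\{1,n\}$; it is written $ab$. For $n\ge 4$, the graph $G_n$ has as vertex set all stable $2$-subsets of $[n]$; two vertices $ab$ ($a<b$) and $cd$ ($c<d$) with $a<c$ are adjacent iff $\{a,b\}\cap\{c,d\}=\emptyset$ and either $a<c<b<d$, or $1<a<c<d<b$. *)

theory Defs
  imports Main
begin

text \<open>A stable 2-subset {a,b} of [n] with a<b is encoded as the pair (a,b).\<close>
definition stable :: "nat \<Rightarrow> nat \<times> nat \<Rightarrow> bool" where
  "stable n v = (case v of (a, b) \<Rightarrow>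
      1 \<le> a \<and> a < b \<and> b \<le> n \<and> b \<noteq> a + 1 \<and> (a, b) \<noteq> (1, n))"

definition Gverts :: "nat \<Rightarrow> (nat \<times> nat) set" where
  "Gverts n = {v. stable n v}"

definition adj_ord :: "nat \<times> nat \<Rightarrow> nat \<times> nat \<Rightarrow> bool" where
  "adj_ord u v = (case u of (a, b) \<Rightarrow> case v of (c, d) \<Rightarrow>
      a < c \<and> {a, b} \<inter> {c, d} = {} \<and> ((a < c \<and> c < b \<and> b < d) \<or> (1 < a \<and> a < c \<and> c < d \<and> d < b)))"

definition Gadj :: "nat \<Rightarrow> nat \<times> nat \<Rightarrow> nat \<times> nat \<Rightarrow> bool" where
  "Gadj n u v = (u \<in> Gverts n \<and> v \<in> Gverts n \<and> (adj_ord u v \<or> adj_ord v u))"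

definition colourable_minus_edge ::
  "nat \<Rightarrow> nat \<times> nat \<Rightarrow> nat \<times> nat \<Rightarrow> nat \<Rightarrow> bool" where
  "colourable_minus_edge n u v k = (\<exists>f :: nat \<times> nat \<Rightarrow> nat.
      (\<forall>x\<in>Gverts n. f x < k) \<and>
      (\<forall>x y. Gadj n x y \<and> {x, y} \<noteq> {u, v} \<longrightarrow> f x \<noteq> f y))"

end

theory Submission
  imports Defs
begin

text \<open>
  Colouring every vertex \<open>pq\<close> by one of its endpoints is proper, because adjacent
  vertices are disjoint pairs, but it uses \<open>n\<close> colours. To save three of them, choose
  forbidden endpoints \<open>i < j < k\<close> depending on the removed edge \<open>uv\<close>, give the three
  vertices \<open>ij, ik, jk\<close> hand-picked colours, and colour any other \<open>pq\<close> by \<open>p\<close> unless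
  \<open>p\<close> is forbidden or is the colour of one of those three vertices adjacent to \<open>pq\<close>,
  in which case use \<open>q\<close>. For a nested edge \<open>ab, cd\<close> (\<open>1 < a < c < d < b\<close>) forbid
  \<open>1, c, d\<close> and colour \<open>1c, 1d, cd\<close> by \<open>c + 1, a, b\<close>; for a crossing edge
  (\<open>a < c < b < d\<close>) forbid \<open>a, c, b\<close> and colour \<open>ab\<close> by \<open>d\<close> and \<open>ac, cb\<close> by \<open>1\<close>,
  or all three by \<open>d\<close> when \<open>a = 1\<close>. A finite case check shows that \<open>uv\<close> is then
  the only monochromatic edge.
\<close>

definition adjacent :: "nat \<times> nat \<Rightarrow> nat \<times> nat \<Rightarrow> bool" where
  "adjacent x y \<longleftrightarrow> adj_ord x y \<or> adj_ord y x"

lemma adjacent_commute: "adjacent x y \<longleftrightarrow> adjacent y x"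
  unfolding adjacent_def by blast

lemma adjacent_iff:
  "adjacent (p, q) (r, s) \<longleftrightarrow>
     p < r \<and> p \<noteq> s \<and> q \<noteq> r \<and> q \<noteq> s \<and> (r < q \<and> q < s \<or> 1 < p \<and> r < s \<and> s < q) \<or>
     r < p \<and> r \<noteq> q \<and> s \<noteq> p \<and> s \<noteq> q \<and> (p < s \<and> s < q \<or> 1 < r \<and> p < q \<and> q < s)"
  unfolding adjacent_def adj_ord_def by auto

lemma adjacent_disjoint:
  "adjacent (p, q) (r, s) \<Longrightarrow> p \<noteq> r \<and> p \<noteq> s \<and> q \<noteq> r \<and> q \<noteq> s"
  unfolding adjacent_iff by auto

lemma Gadj_iff: "Gadj n x y \<longleftrightarrow> x \<in> Gverts n \<and> y \<in> Gverts n \<and> adjacent x y"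
  unfolding Gadj_def adjacent_def ..

lemma Gverts_iff:
  "(p, q) \<in> Gverts n \<longleftrightarrow> 1 \<le> p \<and> p + 2 \<le> q \<and> q \<le> n \<and> (p = 1 \<longrightarrow> q \<noteq> n)"
  unfolding Gverts_def stable_def by auto

lemma colourable_minus_edge_if_colouring_into:
  assumes "finite S" "card S \<le> k"
    and range: "\<And>x. x \<in> Gverts n \<Longrightarrow> g x \<in> S"
    and proper: "\<And>x y. Gadj n x y \<Longrightarrow> {x, y} \<noteq> {u, v} \<Longrightarrow> g x \<noteq> g y"
  shows "colourable_minus_edge n u v k"
proof -
  obtain \<phi> where \<phi>: "bij_betw \<phi> S {0..<card S}"
    using ex_bij_betw_finite_nat[OF \<open>finite S\<close>] by blast
  have "\<forall>x\<in>Gverts n. \<phi> (g x) < k"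
    using range bij_betwE[OF \<phi>] \<open>card S \<le> k\<close> by fastforce
  moreover have "\<forall>x y. Gadj n x y \<and> {x, y} \<noteq> {u, v} \<longrightarrow> \<phi> (g x) \<noteq> \<phi> (g y)"
    using proper range bij_betw_imp_inj_on[OF \<phi>] unfolding Gadj_def inj_on_def by metis
  ultimately show ?thesis
    unfolding colourable_minus_edge_def by (intro exI[of _ "\<phi> \<circ> g"]) simp
qed

definition falls_back ::
  "nat set \<Rightarrow> (nat \<times> nat) set \<Rightarrow> (nat \<times> nat \<Rightarrow> nat) \<Rightarrow> nat \<times> nat \<Rightarrow> bool" where
  "falls_back T E h w \<longleftrightarrow> fst w \<in> T \<or> (\<exists>e\<in>E. adjacent w e \<and> h e = fst w)"

definition endpoint_colouring ::
  "nat set \<Rightarrow> (nat \<times> nat) set \<Rightarrow> (nat \<times> nat \<Rightarrow> nat) \<Rightarrow> nat \<times> nat \<Rightarrow> nat" where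
  "endpoint_colouring T E h w =
     (if w \<in> E then h w else if falls_back T E h w then snd w else fst w)"

lemma endpoint_colouring_proper:
  fixes T E h
  defines "g \<equiv> endpoint_colouring T E h"
  assumes E_indep: "\<And>x y. x \<in> E \<Longrightarrow> y \<in> E \<Longrightarrow> \<not> adjacent x y"
    and conflict: "\<And>x y. x \<in> E \<Longrightarrow> x \<in> Gverts n \<Longrightarrow> y \<in> Gverts n \<Longrightarrow> y \<notin> E \<Longrightarrow>
        adjacent x y \<Longrightarrow> falls_back T E h y \<Longrightarrow> h x = snd y \<Longrightarrow> {x, y} = {u, v}"
    and "Gadj n x y" "{x, y} \<noteq> {u, v}"
  shows "g x \<noteq> g y"
proof
  assume eq: "g x = g y"
  have xy: "x \<in> Gverts n" "y \<in> Gverts n" "adjacent x y"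
    using \<open>Gadj n x y\<close> unfolding Gadj_iff by auto
  have endpoint: "g w \<in> {fst w, snd w}" if "w \<notin> E" for w
    using that unfolding g_def endpoint_colouring_def by simp
  have outside: "g w \<noteq> h e" if "w \<in> Gverts n" "w \<notin> E" "e \<in> E" "e \<in> Gverts n"
    "adjacent e w" "{e, w} \<noteq> {u, v}" for w e
  proof (cases "falls_back T E h w")
    case True
    then show ?thesis using conflict[OF that(3,4,1,2,5) True] that
      unfolding g_def endpoint_colouring_def by auto
  next
    case False
    then show ?thesis using that adjacent_commute[of e w]
      unfolding g_def endpoint_colouring_def falls_back_def by auto
  qed
  consider "x \<in> E" "y \<in> E" | "x \<in> E" "y \<notin> E" | "x \<notin> E" "y \<in> E" | "x \<notin> E" "y \<notin> E"
    by blast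
  then show False
  proof cases
    case 1 then show ?thesis using E_indep xy by blast
  next
    case 2 then show ?thesis using outside[of y x] eq xy \<open>{x, y} \<noteq> {u, v}\<close>
      unfolding g_def endpoint_colouring_def by auto
  next
    case 3 then show ?thesis using outside[of x y] eq xy \<open>{x, y} \<noteq> {u, v}\<close> adjacent_commute
      unfolding g_def endpoint_colouring_def by (auto simp: insert_commute)
  next
    case 4
    obtain p q r s where "x = (p, q)" "y = (r, s)" by fastforce
    then show ?thesis using endpoint[of x] endpoint[of y] 4 eq adjacent_disjoint[of p q r s] xy
      by auto
  qed
qed

lemma triangle_not_adjacent:
  "x \<in> {(i, j), (i, k), (j, k)} \<Longrightarrow> y \<in> {(i, j), (i, k), (j, k)} \<Longrightarrow> \<not> adjacent x y"
  using adjacent_disjoint by blast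

lemma endpoint_colouring_range:
  assumes "w \<in> Gverts n" "h ` E \<subseteq> {1..n} - T"
    and "w \<notin> E \<Longrightarrow> falls_back T E h w \<Longrightarrow> snd w \<notin> T"
  shows "endpoint_colouring T E h w \<in> {1..n} - T"
  using assms unfolding endpoint_colouring_def falls_back_def
  by (cases w) (auto simp: Gverts_iff)

lemma colourable_minus_edge_by_triangle_colouring:
  fixes i j k :: nat and h :: "nat \<times> nat \<Rightarrow> nat"
  defines "T \<equiv> {i, j, k}" and "E \<equiv> {(i, j), (i, k), (j, k)}"
  assumes "1 \<le> i" "i < j" "j < k" "k \<le> n"
    and "h ` E \<subseteq> {1..n} - T"
    and avoid: "\<And>p q e. (p, q) \<in> Gverts n \<Longrightarrow> e \<in> E \<Longrightarrow> adjacent (p, q) e \<Longrightarrow> h e = p \<Longrightarrow> q \<notin> T"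
    and conflict: "\<And>x y. x \<in> E \<Longrightarrow> x \<in> Gverts n \<Longrightarrow> y \<in> Gverts n \<Longrightarrow> y \<notin> E \<Longrightarrow>
        adjacent x y \<Longrightarrow> falls_back T E h y \<Longrightarrow> h x = snd y \<Longrightarrow> {x, y} = {u, v}"
  shows "colourable_minus_edge n u v (n - 3)"
proof (rule colourable_minus_edge_if_colouring_into)
  have "T \<subseteq> {1..n}" "card T = 3"
    using assms(3-6) unfolding T_def by auto
  then show "card ({1..n} - T) \<le> n - 3"
    by (simp add: card_Diff_subset finite_subset)
  show "endpoint_colouring T E h x \<in> {1..n} - T" if "x \<in> Gverts n" for x
  proof (rule endpoint_colouring_range[OF that assms(7)])
    obtain p q where x: "x = (p, q)" by fastforce
    assume "x \<notin> E" "falls_back T E h x"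
    then consider "p \<in> T" | e where "e \<in> E" "adjacent (p, q) e" "h e = p"
      unfolding x falls_back_def by auto
    then show "snd x \<notin> T"
    proof cases
      case 1
      have "p < q" using that unfolding x Gverts_iff by simp
      then show ?thesis using 1 \<open>x \<notin> E\<close> assms(4,5) unfolding x T_def E_def by auto
    next
      case 2
      then show ?thesis using avoid that unfolding x by simp
    qed
  qed
  show "endpoint_colouring T E h x \<noteq> endpoint_colouring T E h y"
    if "Gadj n x y" "{x, y} \<noteq> {u, v}" for x y
    by (rule endpoint_colouring_proper[OF _ conflict that])
      (simp add: E_def triangle_not_adjacent)
qed simp

lemma colourable_minus_nested_edge:
  assumes "1 < a" "a < c" "c + 2 \<le> d" "d < b" "b \<le> n"
  shows "colourable_minus_edge n (a, b) (c, d) (n - 3)"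
proof (rule colourable_minus_edge_by_triangle_colouring
    [where i = 1 and j = c and k = d
       and h = "\<lambda>w. if w = (1, c) then c + 1 else if w = (1, d) then a else b"])
  let ?h = "\<lambda>w. if w = (1, c) then c + 1 else if w = (1, d) then a else b"
  let ?T = "{1, c, d}" and ?E = "{(1, c), (1, d), (c, d)}"
  show "q \<notin> ?T" if "(p, q) \<in> Gverts n" "e \<in> ?E" "adjacent (p, q) e" "?h e = p" for p q e
    using assms that by (auto simp: adjacent_iff Gverts_iff)
  show "{x, y} = {(a, b), (c, d)}"
    if xy: "x \<in> ?E" "x \<in> Gverts n" "y \<in> Gverts n" "y \<notin> ?E" "adjacent x y"
      "falls_back ?T ?E ?h y" "?h x = snd y" for x y
  proof -
    obtain r s where y: "y = (r, s)" by fastforce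
    consider "x = (1, c)" "s = c + 1" | "x = (1, d)" "s = a" | "x = (c, d)" "s = b"
      using assms xy(1,7) unfolding y by auto
    then show ?thesis
      by cases (use assms xy in \<open>auto simp: y falls_back_def adjacent_iff Gverts_iff\<close>)
  qed
qed (use assms in simp_all)

lemma colourable_minus_crossing_edge_at_1:
  assumes "1 < c" "c < b" "b < d" "d \<le> n"
  shows "colourable_minus_edge n (1, b) (c, d) (n - 3)"
proof (rule colourable_minus_edge_by_triangle_colouring
    [where i = 1 and j = c and k = b and h = "\<lambda>_. d"])
  let ?T = "{1, c, b}" and ?E = "{(1, c), (1, b), (c, b)}"
  show "q \<notin> ?T" if "(p, q) \<in> Gverts n" "d = p" for p q
    using assms that by (auto simp: Gverts_iff)
  show "{x, y} = {(1, b), (c, d)}"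
    if xy: "x \<in> ?E" "x \<in> Gverts n" "y \<in> Gverts n" "y \<notin> ?E" "adjacent x y"
      "falls_back ?T ?E (\<lambda>_. d) y" "d = snd y" for x y
  proof -
    obtain r where y: "y = (r, d)" using xy(7) by (metis prod.collapse)
    have "r < d" using xy(3) unfolding y Gverts_iff by simp
    then have "r \<in> ?T" using xy(6) unfolding y falls_back_def by auto
    then show ?thesis
      using xy(1,5) assms unfolding y by (auto simp: adjacent_iff)
  qed
qed (use assms in simp_all)

lemma colourable_minus_crossing_edge:
  assumes "1 < a" "a < c" "c < b" "b < d" "d \<le> n"
  shows "colourable_minus_edge n (a, b) (c, d) (n - 3)"
proof (rule colourable_minus_edge_by_triangle_colouring
    [where i = a and j = c and k = b and h = "\<lambda>w. if w = (a, b) then d else 1"])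
  let ?h = "\<lambda>w. if w = (a, b) then d else 1"
  let ?T = "{a, c, b}" and ?E = "{(a, c), (a, b), (c, b)}"
  show "q \<notin> ?T" if "(p, q) \<in> Gverts n" "e \<in> ?E" "adjacent (p, q) e" "?h e = p" for p q e
    using assms that by (auto simp: adjacent_iff Gverts_iff)
  show "{x, y} = {(a, b), (c, d)}"
    if xy: "x \<in> ?E" "x \<in> Gverts n" "y \<in> Gverts n" "y \<notin> ?E" "adjacent x y"
      "falls_back ?T ?E ?h y" "?h x = snd y" for x y
  proof -
    obtain r s where y: "y = (r, s)" by fastforce
    have "r + 2 \<le> s" using xy(3) unfolding y Gverts_iff by simp
    then have "x = (a, b)" "s = d" using assms xy(1,7) unfolding y by auto
    then have "r \<in> ?T \<or> r = 1" using xy(6) \<open>r + 2 \<le> s\<close> unfolding y falls_back_def by auto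
    then show ?thesis
      using xy(5) assms unfolding y \<open>x = (a, b)\<close> \<open>s = d\<close> by (auto simp: adjacent_iff)
  qed
qed (use assms in simp_all)

lemma colourable_minus_edge_commute:
  "colourable_minus_edge n u v k \<longleftrightarrow> colourable_minus_edge n v u k"
  unfolding colourable_minus_edge_def by (simp add: insert_commute)

lemma colourable_minus_edge_if_adj_ord:
  assumes "u \<in> Gverts n" "v \<in> Gverts n" "adj_ord u v"
  shows "colourable_minus_edge n u v (n - 3)"
proof -
  obtain a b c d where uv: "u = (a, b)" "v = (c, d)" by fastforce
  have "1 \<le> a" "a + 2 \<le> b" "b \<le> n" "1 \<le> c" "c + 2 \<le> d" "d \<le> n"
    using assms(1,2) unfolding uv Gverts_iff by auto
  moreover have "a < c" "a \<noteq> d" "b \<noteq> c" "b \<noteq> d" "c < b \<and> b < d \<or> 1 < a \<and> c < d \<and> d < b"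
    using assms(3) unfolding uv adj_ord_def by auto
  ultimately consider "a = 1" "1 < c" "c < b" "b < d" | "1 < a" "a < c" "c < b" "b < d"
    | "1 < a" "a < c" "c + 2 \<le> d" "d < b"
    by linarith
  then show ?thesis
    using colourable_minus_crossing_edge_at_1 colourable_minus_crossing_edge colourable_minus_nested_edge
      \<open>b \<le> n\<close> \<open>d \<le> n\<close> unfolding uv by cases blast+
qed

theorem lemma4:
  fixes n :: nat and u v :: "nat \<times> nat"
  assumes "n \<ge> 4" and "Gadj n u v"
  shows "colourable_minus_edge n u v (n - 3)"
proof -
  have "u \<in> Gverts n" "v \<in> Gverts n" "adj_ord u v \<or> adj_ord v u"
    using assms(2) unfolding Gadj_def by auto
  then show ?thesis
    using colourable_minus_edge_if_adj_ord colourable_minus_edge_commute by blast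
qed

end
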